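(* For each $n\in\mathbb{N}$ let $L_n\in\{n-1,n\}$ and let $S_{\mathbf{a}^n}$ be a linear binary subdivision scheme of the form \[ (S_{\mathbf{a}^n} \mathbf{f})_{2j} = \sum_{l=1-n}^{L_n} a^{n,0}_{l} f_{j+l}, \qquad (S_{\mathbf{a}^n} \mathbf{f})_{2j + 1} = \sum_{l=1-n}^{L_n+1} a^{n,1}_{l} f_{j+l}, \qquad j\in\mathbb{Z}, \] which is odd-symmetric, i.e. $a^{n,0}_l=a^{n,0}_{L_n+1-n-l}$ for $l=1-n,\ldots,L_n$ and $a^{n,1}_l=a^{n,1}_{L_n+2-n-l}$ for $l=1-n,\ldots,L_n+1$, and which reproduces constants: $\sum_{l} a^{n,0}_l=\sum_{l} a^{n,1}_l=1$. Let $r:[-1,1]\to\mathbb{R}$ be $\mathcal{C}^1$, $R(t):=\int_{-1}^t r(s)\,ds$, and assume there are $\alpha>2$, $\mu>0$ such that for all $n$ and all $j=1-n,\ldots,L_n$, \[ a^{n,0}_{j} - a^{n,1}_{j} = r(j/n)\,n^{-2} + \varepsilon^n_j, \qquad |\varepsilon^n_j| \leq \mu n^{-\alpha}, \] and $\int_{-1}^1|R(t)|\,dt<1$. Then there exists $n_0$ such that $S_{\mathbf{a}^n}$ is (uniformly) convergent for every $n>n_0$. If moreover $\alpha=3$, one may take, with $\|R\|_1=\int_{-1}^1|R|$, $\|r\|_\infty=\max_{[-1,1]}|r|$, $\|r'\|_\infty=\max_{[-1,1]}|r'|$ and $B=\|r\|_\infty+2(\mu+\|r'\|_\infty)$, \[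 n_0=\frac{\sqrt{B^2+4(\|R\|_1-1)(\mu+\|r'\|_\infty)}+B}{2(1-\|R\|_1)} \ \text{ if } L_n=n-1, \qquad n_0=\frac{\sqrt{B^2+4(1-\|R\|_1)\mu}+B}{2(1-\|R\|_1)} \ \text{ if } L_n=n. \]
   Context: A subdivision scheme $S$ is (uniformly) convergent if for every bounded real sequence $\mathbf{f}^0$ there is a continuous $F:\mathbb{R}\to\mathbb{R}$ with $\lim_{k\to\infty}\sup_{j\in\mathbb{Z}}|(S^k\mathbf{f}^0)_j-F(2^{-k}j)|=0$. *)

theory Defs
  imports "HOL-Analysis.Analysis"
begin

definition subdiv ::
  "(int \<Rightarrow> real) \<Rightarrow> (int \<Rightarrow> real) \<Rightarrow> int \<Rightarrow> int \<Rightarrow> (int \<Rightarrow> real) \<Rightarrow> int \<Rightarrow> real" where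
  "subdiv a0 a1 lo hi f j =
     (if even j then (\<Sum>l\<in>{lo..hi}. a0 l * f (j div 2 + l))
      else (\<Sum>l\<in>{lo..hi+1}. a1 l * f (j div 2 + l)))"

definition convergent_scheme :: "((int \<Rightarrow> real) \<Rightarrow> (int \<Rightarrow> real)) \<Rightarrow> bool" where
  "convergent_scheme S \<longleftrightarrow>
     (\<forall>f0 :: int \<Rightarrow> real. bounded (range f0) \<longrightarrow>
        (\<exists>F :: real \<Rightarrow> real. continuous_on UNIV F \<and>
           (\<forall>e>0. \<exists>K. \<forall>k\<ge>K. \<forall>j. \<bar>(S ^^ k) f0 j - F (real_of_int j / 2 ^ k)\<bar> \<le> e)))"

end

theory Submission
  imports Defs
begin

text \<open>
  A scheme reproducing constants converges as soon as its difference sequences contract by a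
  fixed factor q < 1 per step: the piecewise constant interpolants of the refined sequences then
  converge uniformly at a geometric rate to a continuous limit. For an odd-symmetric scheme,
  summation by parts shows that the difference scheme has the coefficients
  b_k = sum_{m <= k} (a0_m - a1_m), so one may take q = sum_k |b_k|.
  If a0_j - a1_j is r(j/n)/n^2 up to mu n^-alpha, then n b_k is a right Riemann sum for
  R(x_k), and sum_k |b_k| is in turn a Riemann sum for the L1 norm of R. The resulting bound
  |R|_1 + O(1/n) + O(n^(2 - alpha)) is below 1 for large n. For alpha = 3 all error terms are
  explicit, and multiplying the bound by n^2 gives a quadratic inequality in n whose larger
  root is the threshold n0.
\<close>

section \<open>Convergence of contractive schemes\<close>

lemma abs_diff_le_int_steps:
  fixes g :: "int \<Rightarrow> real"
  assumes step: "\<And>i. \<bar>g (i + 1) - g i\<bar> \<le> D"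
  shows "\<bar>g j - g i\<bar> \<le> of_int \<bar>j - i\<bar> * D"
proof -
  have nat_steps: "\<bar>g (i + int k) - g i\<bar> \<le> real k * D" for i k
  proof (induction k)
    case (Suc k)
    have "\<bar>g (i + int (Suc k)) - g i\<bar> \<le> \<bar>g (i + int k + 1) - g (i + int k)\<bar> + \<bar>g (i + int k) - g i\<bar>"
      by (simp add: add.assoc add.commute[of 1])
    also have "\<dots> \<le> D + real k * D" using step Suc by (rule add_mono)
    finally show ?case by (simp add: algebra_simps)
  qed simp
  show ?thesis
  proof (cases "i \<le> j")
    case True
    then show ?thesis using nat_steps[of i "nat (j - i)"] by simp
  next
    case False
    then show ?thesis using nat_steps[of j "nat (i - j)"] by (simp add: abs_minus_commute)
  qed
qed

lemma abs_diff_floor_le: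
  fixes g :: "int \<Rightarrow> real" and x y :: real
  assumes step: "\<And>i. \<bar>g (i + 1) - g i\<bar> \<le> D" and "\<bar>y - x\<bar> < 1"
  shows "\<bar>g \<lfloor>y\<rfloor> - g \<lfloor>x\<rfloor>\<bar> \<le> D"
proof -
  have "D \<ge> 0" using step[of 0] by simp
  moreover have "\<bar>\<lfloor>y\<rfloor> - \<lfloor>x\<rfloor>\<bar> \<le> 1" using \<open>\<bar>y - x\<bar> < 1\<close> by linarith
  ultimately have "of_int \<bar>\<lfloor>y\<rfloor> - \<lfloor>x\<rfloor>\<bar> * D \<le> D"
    by (intro mult_left_le_one_le) simp_all
  with abs_diff_le_int_steps[of g, OF step] show ?thesis by (rule order_trans)
qed

lemma floor_double_cases: "\<lfloor>2 * y\<rfloor> - 2 * \<lfloor>y\<rfloor> \<in> {0, 1}" for y :: real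
proof -
  have "2 * \<lfloor>y\<rfloor> \<le> \<lfloor>2 * y\<rfloor>" by (simp add: le_floor_iff)
  moreover have "\<lfloor>2 * y\<rfloor> < 2 * \<lfloor>y\<rfloor> + 2" by (simp add: floor_less_iff) linarith
  ultimately show ?thesis by auto
qed

lemma uniform_limit_of_geometric_increments:
  fixes G :: "nat \<Rightarrow> 'a \<Rightarrow> real"
  assumes q: "0 \<le> q" "q < 1" and step: "\<And>k x. \<bar>G (Suc k) x - G k x\<bar> \<le> C * q ^ k"
  shows "\<exists>F. \<forall>k x. \<bar>F x - G k x\<bar> \<le> C * q ^ k / (1 - q)"
proof -
  have geom: "(\<lambda>i. C * q ^ k * q ^ i) sums (C * q ^ k / (1 - q))" for k
    using sums_mult[OF geometric_sums[of q], of "C * q ^ k"] q by simp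
  define d where "d x i = G (Suc i) x - G i x" for x i
  have summ: "summable (d x)" for x
  proof (rule summable_comparison_test')
    show "summable (\<lambda>i. C * q ^ 0 * q ^ i)" using geom[of 0] by (rule sums_summable)
  qed (use step in \<open>simp add: d_def\<close>)
  define F where "F x = G 0 x + suminf (d x)" for x
  have "\<bar>F x - G k x\<bar> \<le> C * q ^ k / (1 - q)" for k x
  proof -
    have "(\<Sum>i<k. d x i) = G k x - G 0 x"
      unfolding d_def by (rule sum_lessThan_telescope)
    then have "suminf (d x) = (\<Sum>i. d x (i + k)) + (G k x - G 0 x)"
      using suminf_split_initial_segment[OF summ, of x k] by simp
    then have "F x - G k x = (\<Sum>i. d x (i + k))" unfolding F_def by simp
    also have "\<bar>\<dots>\<bar> \<le> (\<Sum>i. C * q ^ k * q ^ i)"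
      unfolding real_norm_def[symmetric]
    proof (rule norm_suminf_le)
      show "norm (d x (i + k)) \<le> C * q ^ k * q ^ i" for i
        using step[of "i + k" x] by (simp add: d_def power_add mult_ac)
    qed (use geom in \<open>rule sums_summable\<close>)
    also have "\<dots> = C * q ^ k / (1 - q)"
      using geom by (rule sums_unique[symmetric])
    finally show ?thesis .
  qed
  then show ?thesis by blast
qed

lemma continuous_on_if_uniformly_approximated:
  fixes F :: "real \<Rightarrow> real" and G :: "nat \<Rightarrow> real \<Rightarrow> real"
  assumes approx: "\<And>k x. \<bar>F x - G k x\<bar> \<le> T k"
    and oscillation: "\<And>k x y. \<bar>y - x\<bar> < \<delta> k \<Longrightarrow> \<bar>G k y - G k x\<bar> \<le> T k"
    and \<delta>: "\<And>k. 0 < \<delta> k" and T: "T \<longlonglongrightarrow> 0"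
  shows "continuous_on UNIV F"
  unfolding continuous_on_iff
proof (intro ballI allI impI)
  fix x \<epsilon> :: real assume "0 < \<epsilon>"
  then have "\<forall>\<^sub>F k in sequentially. 3 * T k < \<epsilon>"
    using tendsto_mult_left[OF T, of 3] by (intro order_tendstoD) auto
  then obtain k where k: "3 * T k < \<epsilon>" by (auto simp: eventually_sequentially)
  have "dist (F y) (F x) < \<epsilon>" if "dist y x < \<delta> k" for y
  proof -
    have "\<bar>F y - G k y\<bar> \<le> T k" "\<bar>F x - G k x\<bar> \<le> T k" "\<bar>G k y - G k x\<bar> \<le> T k"
      using approx oscillation that by (simp_all add: dist_real_def)
    then show ?thesis using k by (simp add: dist_real_def)
  qed
  then show "\<exists>d>0. \<forall>y\<in>UNIV. dist y x < d \<longrightarrow> dist (F y) (F x) < \<epsilon>"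
    using \<delta> by blast
qed

lemma dyadic_refinement_limit:
  fixes v :: "nat \<Rightarrow> int \<Rightarrow> real"
  assumes q: "0 \<le> q" "q < 1"
    and diff: "\<And>k i. \<bar>v k (i + 1) - v k i\<bar> \<le> C * q ^ k"
    and refine: "\<And>k i e. e \<in> {0, 1} \<Longrightarrow> \<bar>v (Suc k) (2 * i + e) - v k i\<bar> \<le> C * q ^ k"
  shows "\<exists>F :: real \<Rightarrow> real. continuous_on UNIV F \<and>
           (\<forall>\<epsilon>>0. \<exists>K. \<forall>k\<ge>K. \<forall>j. \<bar>v k j - F (of_int j / 2 ^ k)\<bar> \<le> \<epsilon>)"
proof -
  define G where "G k x = v k \<lfloor>2 ^ k * x\<rfloor>" for k and x :: real
  define T where "T k = C * q ^ k / (1 - q)" for k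
  have "\<bar>G (Suc k) x - G k x\<bar> \<le> C * q ^ k" for k x
    using refine[OF floor_double_cases[of "2 ^ k * x"], of k "\<lfloor>2 ^ k * x\<rfloor>"]
    by (simp add: G_def mult.assoc)
  then obtain F where FG: "\<And>k x. \<bar>F x - G k x\<bar> \<le> T k"
    unfolding T_def using uniform_limit_of_geometric_increments[OF q] by blast
  have T: "T \<longlonglongrightarrow> 0"
    unfolding T_def using q by (auto intro!: tendsto_eq_intros LIMSEQ_power_zero)
  have "continuous_on UNIV F"
  proof (rule continuous_on_if_uniformly_approximated[OF FG _ _ T])
    show "\<bar>G k y - G k x\<bar> \<le> T k" if "\<bar>y - x\<bar> < 1 / 2 ^ k" for k x y
    proof -
      have "\<bar>2 ^ k * y - 2 ^ k * x\<bar> = 2 ^ k * \<bar>y - x\<bar>"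
        by (simp add: abs_mult flip: right_diff_distrib)
      also have "\<dots> < 1" using that by (simp add: field_simps)
      finally have "\<bar>2 ^ k * y - 2 ^ k * x\<bar> < 1" .
      then have "\<bar>G k y - G k x\<bar> \<le> C * q ^ k"
        unfolding G_def by (rule abs_diff_floor_le[of "v k", OF diff])
      also have "\<dots> \<le> T k"
      proof -
        have "0 \<le> C" using diff[of 0 0] by simp
        then show ?thesis using q by (simp add: T_def le_divide_eq mult_left_le)
      qed
      finally show ?thesis .
    qed
  qed simp
  moreover have "\<exists>K. \<forall>k\<ge>K. \<forall>j. \<bar>v k j - F (of_int j / 2 ^ k)\<bar> \<le> \<epsilon>" if "\<epsilon> > 0" for \<epsilon>
  proof -
    obtain K where K: "\<And>k. k \<ge> K \<Longrightarrow> T k < \<epsilon>"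
      using order_tendstoD(2)[OF T \<open>\<epsilon> > 0\<close>] by (auto simp: eventually_sequentially)
    have "G k (of_int j / 2 ^ k) = v k j" for k j by (simp add: G_def)
    then show ?thesis
      using FG K by (metis abs_minus_commute order.strict_implies_order order_trans)
  qed
  ultimately show ?thesis by blast
qed

lemma mask_apply_deviation:
  fixes a g :: "int \<Rightarrow> real"
  assumes "finite A" and "(\<Sum>l\<in>A. a l) = 1" and step: "\<And>i. \<bar>g (i + 1) - g i\<bar> \<le> D"
  shows "\<bar>(\<Sum>l\<in>A. a l * g (i + l)) - g i\<bar> \<le> (\<Sum>l\<in>A. \<bar>a l\<bar> * \<bar>l\<bar>) * D"
proof -
  have "(\<Sum>l\<in>A. a l * g (i + l)) - g i = (\<Sum>l\<in>A. a l * (g (i + l) - g i))"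
    using assms(2) by (simp add: algebra_simps sum_subtractf flip: sum_distrib_right)
  also have "\<bar>\<dots>\<bar> \<le> (\<Sum>l\<in>A. \<bar>a l\<bar> * (\<bar>l\<bar> * D))"
    using abs_diff_le_int_steps[of g, OF step, of "i + _" i]
    by (intro order_trans[OF sum_abs] sum_mono) (simp add: abs_mult mult_left_mono)
  finally show ?thesis by (simp add: sum_distrib_right mult.assoc)
qed

lemma subdiv_refinement_deviation:
  fixes a0 a1 g :: "int \<Rightarrow> real"
  assumes sum0: "(\<Sum>l\<in>{lo..hi}. a0 l) = 1" and sum1: "(\<Sum>l\<in>{lo..hi + 1}. a1 l) = 1"
    and step: "\<And>i. \<bar>g (i + 1) - g i\<bar> \<le> D" and "e \<in> {0, 1}"
  shows "\<bar>subdiv a0 a1 lo hi g (2 * i + e) - g i\<bar>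
         \<le> ((\<Sum>l\<in>{lo..hi}. \<bar>a0 l\<bar> * \<bar>l\<bar>) + (\<Sum>l\<in>{lo..hi + 1}. \<bar>a1 l\<bar> * \<bar>l\<bar>)) * D"
proof -
  have "0 \<le> D" using step[of 0] by simp
  then have "(\<Sum>l\<in>{lo..hi}. \<bar>a0 l\<bar> * \<bar>l\<bar>) * D
      \<le> ((\<Sum>l\<in>{lo..hi}. \<bar>a0 l\<bar> * \<bar>l\<bar>) + (\<Sum>l\<in>{lo..hi + 1}. \<bar>a1 l\<bar> * \<bar>l\<bar>)) * D"
    "(\<Sum>l\<in>{lo..hi + 1}. \<bar>a1 l\<bar> * \<bar>l\<bar>) * D
      \<le> ((\<Sum>l\<in>{lo..hi}. \<bar>a0 l\<bar> * \<bar>l\<bar>) + (\<Sum>l\<in>{lo..hi + 1}. \<bar>a1 l\<bar> * \<bar>l\<bar>)) * D"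
    by (simp_all add: mult_right_mono sum_nonneg)
  moreover note mask_apply_deviation[where g = g, OF _ sum0 step, of i]
    mask_apply_deviation[where g = g, OF _ sum1 step, of i]
  ultimately show ?thesis using \<open>e \<in> {0, 1}\<close> by (auto simp: subdiv_def)
qed

lemma convergent_scheme_if_contractive:
  fixes a0 a1 :: "int \<Rightarrow> real"
  assumes sum0: "(\<Sum>l\<in>{lo..hi}. a0 l) = 1" and sum1: "(\<Sum>l\<in>{lo..hi + 1}. a1 l) = 1"
    and q: "0 \<le> q" "q < 1"
    and contractive: "\<And>g D i. (\<And>i. \<bar>g (i + 1) - g i\<bar> \<le> D) \<Longrightarrow>
          \<bar>subdiv a0 a1 lo hi g (i + 1) - subdiv a0 a1 lo hi g i\<bar> \<le> q * D"
  shows "convergent_scheme (subdiv a0 a1 lo hi)"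
  unfolding convergent_scheme_def
proof (intro allI impI)
  fix f0 :: "int \<Rightarrow> real"
  assume "bounded (range f0)"
  then obtain M where M: "\<And>i. \<bar>f0 i\<bar> \<le> M" unfolding bounded_iff by auto
  define v where "v k = (subdiv a0 a1 lo hi ^^ k) f0" for k
  define K where "K = (\<Sum>l\<in>{lo..hi}. \<bar>a0 l\<bar> * \<bar>l\<bar>) + (\<Sum>l\<in>{lo..hi + 1}. \<bar>a1 l\<bar> * \<bar>l\<bar>)"
  have v_Suc: "v (Suc k) = subdiv a0 a1 lo hi (v k)" for k by (simp add: v_def)
  have diff: "\<bar>v k (i + 1) - v k i\<bar> \<le> 2 * M * q ^ k" for k i
  proof (induction k arbitrary: i)
    case 0
    show ?case using M[of i] M[of "i + 1"] by (simp add: v_def)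
  next
    case (Suc k)
    then show ?case using contractive[of "v k" "2 * M * q ^ k"] by (simp add: v_Suc mult_ac)
  qed
  have "\<exists>F :: real \<Rightarrow> real. continuous_on UNIV F \<and>
          (\<forall>\<epsilon>>0. \<exists>K. \<forall>k\<ge>K. \<forall>j. \<bar>v k j - F (of_int j / 2 ^ k)\<bar> \<le> \<epsilon>)"
  proof (rule dyadic_refinement_limit[OF q])
    fix k i e
    have "0 \<le> 2 * M * q ^ k" "0 \<le> K * (2 * M * q ^ k)"
      using M[of 0] q by (simp_all add: K_def sum_nonneg)
    moreover have "(1 + K) * (2 * M) * q ^ k = 2 * M * q ^ k + K * (2 * M * q ^ k)"
      by (simp add: algebra_simps)
    moreover have "e \<in> {0, 1} \<Longrightarrow> \<bar>v (Suc k) (2 * i + e) - v k i\<bar> \<le> K * (2 * M * q ^ k)"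
      unfolding K_def v_Suc by (rule subdiv_refinement_deviation[where g = "v k", OF sum0 sum1 diff])
    ultimately show "\<bar>v k (i + 1) - v k i\<bar> \<le> (1 + K) * (2 * M) * q ^ k"
      and "e \<in> {0, 1} \<Longrightarrow> \<bar>v (Suc k) (2 * i + e) - v k i\<bar> \<le> (1 + K) * (2 * M) * q ^ k"
      using diff[of k i] by linarith+
  qed
  then show "\<exists>F. continuous_on UNIV F \<and>
      (\<forall>e>0. \<exists>K. \<forall>k\<ge>K. \<forall>j. \<bar>(subdiv a0 a1 lo hi ^^ k) f0 j - F (real_of_int j / 2 ^ k)\<bar> \<le> e)"
    unfolding v_def .
qed

section \<open>The difference scheme of an odd-symmetric scheme\<close>

text \<open>The partial sums of \<open>a0 - a1\<close> are the coefficients of the difference scheme.\<close>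

definition contraction_factor :: "(int \<Rightarrow> real) \<Rightarrow> (int \<Rightarrow> real) \<Rightarrow> int \<Rightarrow> nat \<Rightarrow> real" where
  "contraction_factor a0 a1 lo N = (\<Sum>k<N. \<bar>\<Sum>m\<le>k. a0 (lo + int m) - a1 (lo + int m)\<bar>)"

lemma sum_int_interval_as_nat:
  "(\<Sum>l\<in>{lo..lo + int N - 1}. f l) = (\<Sum>k<N. f (lo + int k))"
  "(\<Sum>l\<in>{lo..lo + int N}. f l) = (\<Sum>k\<le>N. f (lo + int k))"
  by (rule sum.reindex_bij_witness[of _ "\<lambda>k. lo + int k" "\<lambda>l. nat (l - lo)"]; force)+

lemma summation_by_parts:
  fixes c H :: "nat \<Rightarrow> 'a :: comm_ring"
  shows "(\<Sum>k<N. (\<Sum>m\<le>k. c m) * (H (Suc k) - H k)) = (\<Sum>m<N. c m) * H N - (\<Sum>k<N. c k * H k)"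
  by (induction N) (simp_all add: lessThan_Suc_atMost[symmetric] algebra_simps)

lemma mask_difference_by_parts:
  fixes A0 A1 H :: "nat \<Rightarrow> real"
  assumes "(\<Sum>k<N. A0 k) = (\<Sum>k\<le>N. A1 k)"
  shows "(\<Sum>k\<le>N. A1 k * H k) - (\<Sum>k<N. A0 k * H k)
       = (\<Sum>k<N. (\<Sum>m\<le>k. A0 m - A1 m) * (H (Suc k) - H k))"
proof -
  have "(\<Sum>m<N. A0 m - A1 m) = A1 N"
    using assms by (simp add: sum_subtractf lessThan_Suc_atMost[symmetric])
  then have "(\<Sum>k<N. (\<Sum>m\<le>k. A0 m - A1 m) * (H (Suc k) - H k))
      = A1 N * H N - (\<Sum>k<N. (A0 k - A1 k) * H k)"
    by (simp only: summation_by_parts)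
  also have "\<dots> = (\<Sum>k\<le>N. A1 k * H k) - (\<Sum>k<N. A0 k * H k)"
    by (simp add: left_diff_distrib sum_subtractf lessThan_Suc_atMost[symmetric])
  finally show ?thesis ..
qed

lemma abs_sum_mult_diff_le:
  fixes P H :: "nat \<Rightarrow> real"
  assumes "\<And>k. k < N \<Longrightarrow> \<bar>H (Suc k) - H k\<bar> \<le> D"
  shows "\<bar>\<Sum>k<N. P k * (H (Suc k) - H k)\<bar> \<le> (\<Sum>k<N. \<bar>P k\<bar>) * D"
  unfolding sum_distrib_right using assms
  by (intro order_trans[OF sum_abs] sum_mono) (simp add: abs_mult mult_left_mono)

lemma subdiv_as_nat_sums:
  "subdiv a0 a1 lo (lo + int N - 1) g (2 * j) = (\<Sum>k<N. a0 (lo + int k) * g (j + lo + int k))"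
  "subdiv a0 a1 lo (lo + int N - 1) g (2 * j + 1) = (\<Sum>k\<le>N. a1 (lo + int k) * g (j + lo + int k))"
  by (simp_all add: subdiv_def sum_int_interval_as_nat add_ac)

lemma subdiv_diff_le_contraction_factor:
  fixes a0 a1 g :: "int \<Rightarrow> real"
  assumes sums: "(\<Sum>k<N. a0 (lo + int k)) = (\<Sum>k\<le>N. a1 (lo + int k))"
    and sym0: "\<And>k. k < N \<Longrightarrow> a0 (lo + int k) = a0 (lo + int (N - 1 - k))"
    and sym1: "\<And>k. k \<le> N \<Longrightarrow> a1 (lo + int k) = a1 (lo + int (N - k))"
    and step: "\<And>i. \<bar>g (i + 1) - g i\<bar> \<le> D"
  shows "\<bar>subdiv a0 a1 lo (lo + int N - 1) g (i + 1) - subdiv a0 a1 lo (lo + int N - 1) g i\<bar>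
         \<le> contraction_factor a0 a1 lo N * D"
proof -
  define S where "S = subdiv a0 a1 lo (lo + int N - 1) g"
  define A0 where "A0 k = a0 (lo + int k)" for k
  define A1 where "A1 k = a1 (lo + int k)" for k
  define j where "j = i div 2"
  define G where "G k = g (j + lo + int k)" for k
  have by_parts: "(\<Sum>k\<le>N. A1 k * H k) - (\<Sum>k<N. A0 k * H k)
       = (\<Sum>k<N. (\<Sum>m\<le>k. A0 m - A1 m) * (H (Suc k) - H k))" for H
    using mask_difference_by_parts sums unfolding A0_def A1_def by blast
  have bound: "\<bar>\<Sum>k<N. (\<Sum>m\<le>k. A0 m - A1 m) * (H (Suc k) - H k)\<bar> \<le> contraction_factor a0 a1 lo N * D"
    if "\<And>k. k < N \<Longrightarrow> \<bar>H (Suc k) - H k\<bar> \<le> D" for H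
    using abs_sum_mult_diff_le[where H = H, OF that] by (simp add: contraction_factor_def A0_def A1_def)
  have S_even: "S (2 * j) = (\<Sum>k<N. A0 k * G k)"
    and S_odd: "S (2 * j + 1) = (\<Sum>k\<le>N. A1 k * G k)"
    unfolding S_def subdiv_as_nat_sums by (simp_all add: A0_def A1_def G_def)
  have S_even': "S (2 * j + 2) = (\<Sum>k<N. A0 k * G (Suc k))"
    using subdiv_as_nat_sums(1)[of a0 a1 lo N g "j + 1"]
    by (simp add: S_def A0_def G_def distrib_left add_ac)
  show ?thesis
  proof (cases "even i")
    case True
    then have "S (i + 1) - S i = (\<Sum>k<N. (\<Sum>m\<le>k. A0 m - A1 m) * (G (Suc k) - G k))"
      using S_even S_odd by_parts unfolding j_def by simp
    moreover have "\<bar>G (Suc k) - G k\<bar> \<le> D" for k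
      using step[of "j + lo + int k"] by (simp add: G_def algebra_simps)
    ultimately show ?thesis unfolding S_def using bound by simp
  next
    case False
    txt \<open>The mirror symmetry of both masks reduces this to the even case for the reversed
      sequence \<open>H\<close>.\<close>
    define H where "H k = G (N - k)" for k
    have "(\<Sum>k<N. A0 k * G (Suc k)) = (\<Sum>k<N. A0 k * H k)"
      by (rule sum.reindex_bij_witness[of _ "\<lambda>k. N - Suc k" "\<lambda>k. N - Suc k"])
        (auto simp: H_def A0_def sym0 Suc_diff_Suc)
    moreover have "(\<Sum>k\<le>N. A1 k * G k) = (\<Sum>k\<le>N. A1 k * H k)"
      by (rule sum.reindex_bij_witness[of _ "\<lambda>k. N - k" "\<lambda>k. N - k"])
        (auto simp: H_def A1_def sym1)
    moreover have "i = 2 * j + 1" using False by (simp add: j_def)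
    ultimately have "S (i + 1) - S i = - (\<Sum>k<N. (\<Sum>m\<le>k. A0 m - A1 m) * (H (Suc k) - H k))"
      using S_even' S_odd by_parts[of H] by (simp add: add.assoc)
    moreover have "\<bar>H (Suc k) - H k\<bar> \<le> D" if "k < N" for k
      using step[of "j + lo + int (N - Suc k)"] that
      by (simp add: H_def G_def Suc_diff_Suc abs_minus_commute add.assoc)
    ultimately show ?thesis unfolding S_def using bound by simp
  qed
qed

lemma convergent_scheme_if_contraction_factor_less_1:
  fixes a0 a1 :: "int \<Rightarrow> real"
  assumes "lo \<le> hi + 1"
    and sum0: "(\<Sum>l\<in>{lo..hi}. a0 l) = 1" and sum1: "(\<Sum>l\<in>{lo..hi + 1}. a1 l) = 1"
    and sym0: "\<And>l. l \<in> {lo..hi} \<Longrightarrow> a0 l = a0 (lo + hi - l)"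
    and sym1: "\<And>l. l \<in> {lo..hi + 1} \<Longrightarrow> a1 l = a1 (lo + hi + 1 - l)"
    and less_1: "contraction_factor a0 a1 lo (nat (hi - lo + 1)) < 1"
  shows "convergent_scheme (subdiv a0 a1 lo hi)"
proof -
  define N where "N = nat (hi - lo + 1)"
  have hi: "hi = lo + int N - 1" using assms(1) by (simp add: N_def)
  show ?thesis
  proof (rule convergent_scheme_if_contractive)
    show "0 \<le> contraction_factor a0 a1 lo N" by (simp add: contraction_factor_def sum_nonneg)
    show "contraction_factor a0 a1 lo N < 1" using less_1 by (simp add: N_def)
    have "(\<Sum>k<N. a0 (lo + int k)) = (\<Sum>k\<le>N. a1 (lo + int k))"
      using sum0 sum1 by (simp add: hi sum_int_interval_as_nat)
    moreover have "a0 (lo + int k) = a0 (lo + int (N - 1 - k))" if "k < N" for k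
      using sym0[of "lo + int k"] that by (simp add: hi of_nat_diff algebra_simps)
    moreover have "a1 (lo + int k) = a1 (lo + int (N - k))" if "k \<le> N" for k
      using sym1[of "lo + int k"] that by (simp add: hi of_nat_diff algebra_simps)
    ultimately show "\<bar>subdiv a0 a1 lo hi g (i + 1) - subdiv a0 a1 lo hi g i\<bar>
        \<le> contraction_factor a0 a1 lo N * D" if "\<And>i. \<bar>g (i + 1) - g i\<bar> \<le> D" for g D i
      unfolding hi by (rule subdiv_diff_le_contraction_factor) (simp_all add: that)
  qed (use sum0 sum1 in simp_all)
qed

section \<open>Lipschitz functions and Riemann sums\<close>

lemma lipschitz_on_if_real_derivative_bounded:
  fixes f f' :: "real \<Rightarrow> real"
  assumes "convex S" and "\<And>x. x \<in> S \<Longrightarrow> (f has_real_derivative f' x) (at x within S)"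
    and "\<And>x. x \<in> S \<Longrightarrow> \<bar>f' x\<bar> \<le> B" and "0 \<le> B"
  shows "B-lipschitz_on S f"
  using field_differentiable_bound[OF assms(1,2)] assms(3,4)
  by (intro lipschitz_onI) (auto simp: dist_real_def)

lemma lipschitz_on_abs:
  fixes f :: "'a::metric_space \<Rightarrow> real"
  assumes "C-lipschitz_on S f"
  shows "C-lipschitz_on S (\<lambda>x. \<bar>f x\<bar>)"
  using lipschitz_onD[OF assms] lipschitz_on_nonneg[OF assms]
  by (intro lipschitz_onI) (auto simp: dist_real_def intro: order_trans[OF abs_triangle_ineq3])

lemma abs_le_Sup_abs_image:
  fixes f :: "'a::topological_space \<Rightarrow> real"
  assumes "continuous_on S f" "compact S" "x \<in> S"
  shows "\<bar>f x\<bar> \<le> Sup ((\<lambda>x. \<bar>f x\<bar>) ` S)"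
  using assms
  by (intro cSup_upper imageI bounded_imp_bdd_above compact_imp_bounded compact_continuous_image
      continuous_intros)

lemma lipschitz_on_of_C1:
  fixes r r' :: "real \<Rightarrow> real"
  assumes "a \<le> b"
    and r_deriv: "\<And>x. x \<in> {a..b} \<Longrightarrow> (r has_real_derivative r' x) (at x within {a..b})"
    and r'_cont: "continuous_on {a..b} r'"
  shows "(Sup ((\<lambda>x. \<bar>r' x\<bar>) ` {a..b}))-lipschitz_on {a..b} r"
    and "(Sup ((\<lambda>x. \<bar>r x\<bar>) ` {a..b}))-lipschitz_on {a..b} (\<lambda>t. \<bar>integral {a..t} r\<bar>)"
proof -
  have r_cont: "continuous_on {a..b} r" using r_deriv by (rule DERIV_continuous_on)
  have bound: "\<bar>f x\<bar> \<le> Sup ((\<lambda>x. \<bar>f x\<bar>) ` {a..b})" "0 \<le> Sup ((\<lambda>x. \<bar>f x\<bar>) ` {a..b})"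
    if "continuous_on {a..b} f" "x \<in> {a..b}" for f :: "real \<Rightarrow> real" and x
    using abs_le_Sup_abs_image[OF that(1) compact_Icc] that(2) \<open>a \<le> b\<close>
    by (fastforce intro: order_trans[OF abs_ge_zero])+
  show "(Sup ((\<lambda>x. \<bar>r' x\<bar>) ` {a..b}))-lipschitz_on {a..b} r"
    using bound[OF r'_cont] \<open>a \<le> b\<close>
    by (intro lipschitz_on_if_real_derivative_bounded[OF convex_real_interval(5) r_deriv]) auto
  show "(Sup ((\<lambda>x. \<bar>r x\<bar>) ` {a..b}))-lipschitz_on {a..b} (\<lambda>t. \<bar>integral {a..t} r\<bar>)"
    using bound[OF r_cont] \<open>a \<le> b\<close> integral_has_real_derivative[OF r_cont]
    by (intro lipschitz_on_abs lipschitz_on_if_real_derivative_bounded[OF convex_real_interval(5)]) auto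
qed

lemma right_endpoint_rule_error:
  fixes f :: "real \<Rightarrow> real"
  assumes lip: "M-lipschitz_on {p..q} f" and "p \<le> q"
  shows "\<bar>(q - p) * f q - integral {p..q} f\<bar> \<le> M * (q - p)\<^sup>2 / 2"
proof -
  have f: "f integrable_on {p..q}"
    using lipschitz_on_continuous_on[OF lip] by (rule integrable_continuous_interval)
  have lin: "((\<lambda>s. M * q - M * s) has_integral M * (q - p)\<^sup>2 / 2) {p..q}"
  proof -
    have "((\<lambda>s. M * q - M * s) has_integral (q - p) * (M * q) - M * ((q\<^sup>2 - p\<^sup>2) / 2)) {p..q}"
      using \<open>p \<le> q\<close> has_integral_const_real[of "M * q" p q]
      by (intro has_integral_diff has_integral_mult_right ident_has_integral) auto
    moreover have "(q - p) * (M * q) - M * ((q\<^sup>2 - p\<^sup>2) / 2) = M * (q - p)\<^sup>2 / 2"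
      by (simp add: power2_eq_square field_simps)
    ultimately show ?thesis by (simp only:)
  qed
  have "(q - p) * f q - integral {p..q} f = integral {p..q} (\<lambda>s. f q - f s)"
    using \<open>p \<le> q\<close> by (simp add: integral_diff[OF integrable_const_ivl f])
  also have "\<bar>\<dots>\<bar> \<le> M * (q - p)\<^sup>2 / 2"
    unfolding real_norm_def[symmetric] integral_unique[OF lin, symmetric]
  proof (rule integral_norm_bound_integral)
    show "(\<lambda>s. f q - f s) integrable_on {p..q}" using f by (intro integrable_diff) auto
    show "norm (f q - f s) \<le> M * q - M * s" if "s \<in> {p..q}" for s
      using lipschitz_onD[OF lip, of q s] that \<open>p \<le> q\<close> by (simp add: dist_real_def right_diff_distrib)
  qed (use lin in blast)
  finally show ?thesis .
qed

lemma right_riemann_sum_error: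
  fixes f :: "real \<Rightarrow> real"
  assumes lip: "M-lipschitz_on {a..b} f" and "0 < h" and "a + real k * h \<le> b"
  shows "\<bar>(\<Sum>m<k. h * f (a + real (Suc m) * h)) - integral {a..a + real k * h} f\<bar>
         \<le> real k * M * h\<^sup>2 / 2"
  using assms(3)
proof (induction k)
  case (Suc k)
  define p where "p = a + real k * h"
  have p: "a \<le> p" "p + h \<le> b" "a + real (Suc k) * h = p + h"
    using Suc.prems \<open>0 < h\<close> by (simp_all add: p_def algebra_simps)
  have "integral {a..p + h} f = integral {a..p} f + integral {p..p + h} f"
    using p \<open>0 < h\<close> lipschitz_on_continuous_on[OF lipschitz_on_subset[OF lip]]
    by (intro Henstock_Kurzweil_Integration.integral_combine[symmetric] integrable_continuous_interval)
      auto
  then have "(\<Sum>m<Suc k. h * f (a + real (Suc m) * h)) - integral {a..a + real (Suc k) * h} f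
      = ((\<Sum>m<k. h * f (a + real (Suc m) * h)) - integral {a..p} f)
        + (h * f (p + h) - integral {p..p + h} f)"
    unfolding sum.lessThan_Suc p(3) by simp
  also have "\<bar>\<dots>\<bar> \<le> real k * M * h\<^sup>2 / 2 + M * h\<^sup>2 / 2"
    using Suc.IH right_endpoint_rule_error[OF lipschitz_on_subset[OF lip], of p "p + h"] p \<open>0 < h\<close>
    by (intro order_trans[OF abs_triangle_ineq] add_mono) (simp_all add: p_def)
  also have "\<dots> = real (Suc k) * M * h\<^sup>2 / 2"
    by (simp add: field_simps)
  finally show ?case .
qed simp

section \<open>Schemes approximating a profile\<close>

lemma gauss_sum_Suc_lessThan: "(\<Sum>k<N. real (Suc k)) = real N * (real N + 1) / 2"
  by (induction N) (simp_all add: field_simps)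

lemma abs_partial_sum_le_integral:
  fixes d :: "nat \<Rightarrow> real" and r :: "real \<Rightarrow> real" and h :: real
  assumes h: "0 < h" and "a + real (Suc k) * h \<le> b"
    and approx: "\<And>m. m \<le> k \<Longrightarrow> \<bar>d m - h * (h * r (a + real (Suc m) * h))\<bar> \<le> E"
    and r_lip: "C'-lipschitz_on {a..b} r"
  shows "\<bar>\<Sum>m\<le>k. d m\<bar>
         \<le> h * \<bar>integral {a..a + real (Suc k) * h} r\<bar> + real (Suc k) * (C' * h ^ 3 / 2 + E)"
proof -
  define x where "x m = a + real (Suc m) * h" for m
  have err: "\<bar>\<Sum>m\<le>k. d m - h * (h * r (x m))\<bar> \<le> real (Suc k) * E"
    using sum_bounded_above[of "{..k}" "\<lambda>m. \<bar>d m - h * (h * r (x m))\<bar>" E] approx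
    by (intro order_trans[OF sum_abs]) (simp add: x_def)
  have "\<bar>(\<Sum>m<Suc k. h * r (x m)) - integral {a..x k} r\<bar> \<le> real (Suc k) * C' * h\<^sup>2 / 2"
    using right_riemann_sum_error[OF r_lip h, of "Suc k"] assms(2) by (simp add: x_def)
  then have "\<bar>\<Sum>m\<le>k. h * r (x m)\<bar> \<le> \<bar>integral {a..x k} r\<bar> + real (Suc k) * C' * h\<^sup>2 / 2"
    unfolding lessThan_Suc_atMost by linarith
  then have "h * \<bar>\<Sum>m\<le>k. h * r (x m)\<bar> \<le> h * (\<bar>integral {a..x k} r\<bar> + real (Suc k) * C' * h\<^sup>2 / 2)"
    using h by (simp add: mult_left_mono)
  then have "\<bar>h * (\<Sum>m\<le>k. h * r (x m))\<bar> \<le> h * \<bar>integral {a..x k} r\<bar> + real (Suc k) * (C' * h ^ 3 / 2)"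
    using h by (simp add: abs_mult power2_eq_square power3_eq_cube algebra_simps)
  moreover have "(\<Sum>m\<le>k. d m) = h * (\<Sum>m\<le>k. h * r (x m)) + (\<Sum>m\<le>k. d m - h * (h * r (x m)))"
    by (simp add: sum_subtractf sum_distrib_left)
  ultimately show ?thesis using err by (simp add: x_def distrib_left)
qed

lemma contraction_factor_le_profile:
  fixes a0 a1 :: "int \<Rightarrow> real" and r :: "real \<Rightarrow> real"
  assumes n: "1 \<le> n" and N: "N \<le> 2 * n"
    and approx: "\<And>j. j \<in> {1 - int n..int N - int n} \<Longrightarrow>
        \<bar>a0 j - a1 j - r (of_int j / real n) / (real n)\<^sup>2\<bar> \<le> E"
    and r_lip: "C'-lipschitz_on {-1..1} r"
    and R_lip: "C-lipschitz_on {-1..1} (\<lambda>t. \<bar>integral {-1..t} r\<bar>)"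
  shows "contraction_factor a0 a1 (1 - int n) N
    \<le> integral {-1..1} (\<lambda>t. \<bar>integral {-1..t} r\<bar>) + C / real n
      + (C' / (2 * real n ^ 3) + E) * (real N * (real N + 1) / 2)"
proof -
  define h where "h = 1 / real n"
  define R where "R k = integral {-1..-1 + real (Suc k) * h} r" for k
  have h: "0 < h" "real n * h = 1" using n by (simp_all add: h_def)
  have le_1: "-1 + real (Suc k) * h \<le> 1" if "k < 2 * n" for k
  proof -
    have "real (Suc k) * h \<le> real (2 * n) * h" using that h by (intro mult_right_mono) auto
    then show ?thesis using h(2) by simp
  qed
  have "\<bar>\<Sum>m\<le>k. a0 (1 - int n + int m) - a1 (1 - int n + int m)\<bar>
      \<le> h * \<bar>R k\<bar> + real (Suc k) * (C' * h ^ 3 / 2 + E)" if "k < N" for k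
    unfolding R_def
  proof (rule abs_partial_sum_le_integral[OF h(1) le_1 _ r_lip])
    show "\<bar>a0 (1 - int n + int m) - a1 (1 - int n + int m) - h * (h * r (-1 + real (Suc m) * h))\<bar> \<le> E"
      if "m \<le> k" for m
      using approx[of "1 - int n + int m"] h \<open>m \<le> k\<close> \<open>k < N\<close>
      by (simp add: h_def power2_eq_square field_simps)
  qed (use N that in simp)
  then have "contraction_factor a0 a1 (1 - int n) N
      \<le> (\<Sum>k<N. h * \<bar>R k\<bar> + real (Suc k) * (C' * h ^ 3 / 2 + E))"
    unfolding contraction_factor_def by (intro sum_mono) simp
  also have "\<dots> = (\<Sum>k<N. h * \<bar>R k\<bar>) + (\<Sum>k<N. real (Suc k)) * (C' * h ^ 3 / 2 + E)"
    by (simp only: sum.distrib sum_distrib_right)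
  also have "(\<Sum>k<N. h * \<bar>R k\<bar>) \<le> (\<Sum>k<2 * n. h * \<bar>R k\<bar>)"
    using N h by (intro sum_mono2) auto
  also have "\<dots> \<le> integral {-1..1} (\<lambda>t. \<bar>integral {-1..t} r\<bar>) + C * h"
  proof -
    have right_end: "-1 + real (2 * n) * h = 1" using h(2) by simp
    have "\<bar>(\<Sum>k<2 * n. h * \<bar>R k\<bar>) - integral {-1..1} (\<lambda>t. \<bar>integral {-1..t} r\<bar>)\<bar>
        \<le> real (2 * n) * C * h\<^sup>2 / 2"
      using right_riemann_sum_error[OF R_lip h(1), of "2 * n", unfolded right_end]
      by (simp add: R_def)
    moreover have "real (2 * n) * C * h\<^sup>2 / 2 = C * h"
      using h by (simp add: power2_eq_square)
    ultimately show ?thesis by linarith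
  qed
  finally show ?thesis
    unfolding gauss_sum_Suc_lessThan by (simp add: h_def power3_eq_cube algebra_simps)
qed

definition contraction_bound :: "real \<Rightarrow> real \<Rightarrow> real \<Rightarrow> real \<Rightarrow> real \<Rightarrow> real \<Rightarrow> real" where
  "contraction_bound nR C C' E t N = nR + C / t + (C' / (2 * t ^ 3) + E) * (N * (N + 1) / 2)"

lemma convergent_scheme_if_contraction_bound_less_1:
  fixes a0 a1 :: "int \<Rightarrow> real" and r :: "real \<Rightarrow> real"
  assumes n: "1 \<le> n" and L: "- int n \<le> L" "L \<le> int n"
    and sym0: "\<And>l. l \<in> {1 - int n..L} \<Longrightarrow> a0 l = a0 (L + 1 - int n - l)"
    and sym1: "\<And>l. l \<in> {1 - int n..L + 1} \<Longrightarrow> a1 l = a1 (L + 2 - int n - l)"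
    and sum0: "(\<Sum>l\<in>{1 - int n..L}. a0 l) = 1" and sum1: "(\<Sum>l\<in>{1 - int n..L + 1}. a1 l) = 1"
    and approx: "\<And>j. j \<in> {1 - int n..L} \<Longrightarrow>
        \<bar>a0 j - a1 j - r (of_int j / real n) * real n powr (-2)\<bar> \<le> E"
    and r_lip: "C'-lipschitz_on {-1..1} r"
    and R_lip: "C-lipschitz_on {-1..1} (\<lambda>t. \<bar>integral {-1..t} r\<bar>)"
    and less_1: "contraction_bound (integral {-1..1} (\<lambda>t. \<bar>integral {-1..t} r\<bar>)) C C' E
        (real n) (real (nat (L + int n))) < 1"
  shows "convergent_scheme (subdiv a0 a1 (1 - int n) L)"
proof (rule convergent_scheme_if_contraction_factor_less_1)
  define N where "N = nat (L + int n)"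
  have N: "int N = L + int n" "N \<le> 2 * n" using L by (auto simp: N_def)
  have "real n powr (-2) = 1 / (real n)\<^sup>2" by (simp add: powr_minus_divide)
  then have "contraction_factor a0 a1 (1 - int n) N
      \<le> contraction_bound (integral {-1..1} (\<lambda>t. \<bar>integral {-1..t} r\<bar>)) C C' E (real n) (real N)"
    unfolding contraction_bound_def using approx N
    by (intro contraction_factor_le_profile[OF n N(2) _ r_lip R_lip]) (simp add: N(1))
  with less_1 show "contraction_factor a0 a1 (1 - int n) (nat (L - (1 - int n) + 1)) < 1"
    by (simp add: N_def)
  show "1 - int n \<le> L + 1" using L by simp
  show "a0 l = a0 (1 - int n + L - l)" if "l \<in> {1 - int n..L}" for l
    using sym0[OF that] by (simp add: algebra_simps)
  show "a1 l = a1 (1 - int n + L + 1 - l)" if "l \<in> {1 - int n..L + 1}" for l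
    using sym1[OF that] by (simp add: algebra_simps)
qed (use sum0 sum1 in simp_all)

lemma quadratic_pos_beyond_root:
  fixes A B C D x :: real
  assumes A: "0 < A" and D: "D = B\<^sup>2 - 4 * A * C" and x: "(sqrt D + B) / (2 * A) < x"
  shows "0 < A * x\<^sup>2 - B * x + C"
proof -
  have root: "sqrt D < 2 * A * x - B" using x A by (simp add: field_simps)
  have "D < (2 * A * x - B)\<^sup>2"
  proof (cases "D \<ge> 0")
    case True
    then have "(sqrt D)\<^sup>2 < (2 * A * x - B)\<^sup>2" using root by (intro power_strict_mono) auto
    then show ?thesis using True by simp
  qed (use zero_le_power2[of "2 * A * x - B"] in linarith)
  then have "0 < 4 * A * (A * x\<^sup>2 - B * x + C)" by (simp add: D power2_eq_square algebra_simps)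
  then show ?thesis using A by (simp add: zero_less_mult_iff)
qed

lemma contraction_bound_eventually_less_1:
  assumes "nR < 1" "2 < \<alpha>" "0 \<le> C" "0 \<le> C'" "0 \<le> \<mu>"
  shows "\<exists>t0. \<forall>t N. t0 < t \<and> 0 \<le> N \<and> N \<le> 2 * t \<longrightarrow>
           contraction_bound nR C C' (\<mu> * t powr (-\<alpha>)) t N < 1"
proof -
  have "((\<lambda>t. (C + 2 * C') * inverse t + 3 * \<mu> * t powr (2 - \<alpha>))
      \<longlongrightarrow> (C + 2 * C') * 0 + 3 * \<mu> * 0) at_top"
    using \<open>2 < \<alpha>\<close>
    by (intro tendsto_intros tendsto_inverse_0_at_top tendsto_neg_powr filterlim_ident) simp_all
  then have "((\<lambda>t. (C + 2 * C') / t + 3 * \<mu> * t powr (2 - \<alpha>)) \<longlongrightarrow> 0) at_top"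
    by (simp add: divide_inverse)
  then have "\<forall>\<^sub>F t in at_top. 1 \<le> t \<and> (C + 2 * C') / t + 3 * \<mu> * t powr (2 - \<alpha>) < 1 - nR"
    using \<open>nR < 1\<close> by (intro eventually_conj eventually_ge_at_top order_tendstoD) auto
  then obtain t0 where t0: "\<And>t. t \<ge> t0 \<Longrightarrow> 1 \<le> t \<and> (C + 2 * C') / t + 3 * \<mu> * t powr (2 - \<alpha>) < 1 - nR"
    by (auto simp: eventually_at_top_linorder)
  have "contraction_bound nR C C' (\<mu> * t powr (-\<alpha>)) t N < 1"
    if "t0 < t" "0 \<le> N" "N \<le> 2 * t" for t N
  proof -
    have t: "1 \<le> t" "(C + 2 * C') / t + 3 * \<mu> * t powr (2 - \<alpha>) < 1 - nR" using t0 that(1) by auto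
    have "N * (N + 1) \<le> 2 * t * (2 * t + 1)" using that by (intro mult_mono) auto
    moreover have "2 * t * (2 * t + 1) \<le> 6 * t\<^sup>2"
      using mult_left_mono[of 1 t t] t(1) by (simp add: power2_eq_square algebra_simps)
    ultimately have "N * (N + 1) / 2 \<le> 3 * t\<^sup>2" by simp
    then have "(C' / (2 * t ^ 3) + \<mu> * t powr (-\<alpha>)) * (N * (N + 1) / 2)
        \<le> (C' / (2 * t ^ 3) + \<mu> * t powr (-\<alpha>)) * (3 * t\<^sup>2)"
      using assms t by (intro mult_left_mono) auto
    also have "\<dots> = 3 * C' / (2 * t) + 3 * \<mu> * t powr (2 - \<alpha>)"
      using t by (simp add: powr_diff powr_minus field_simps power2_eq_square power3_eq_cube)
    also have "\<dots> \<le> 2 * C' / t + 3 * \<mu> * t powr (2 - \<alpha>)"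
      using assms t by (simp add: field_simps)
    finally show ?thesis
      using t(2) unfolding contraction_bound_def add_divide_distrib by linarith
  qed
  then show ?thesis by blast
qed

lemma contraction_bound_cubic_less_1_odd:
  fixes nR C C' \<mu> t :: real
  defines "B \<equiv> C + 2 * (\<mu> + C')"
  assumes "nR < 1" "1 \<le> t" "0 \<le> C'"
    and "(sqrt (B\<^sup>2 + 4 * (nR - 1) * (\<mu> + C')) + B) / (2 * (1 - nR)) < t"
  shows "contraction_bound nR C C' (\<mu> * t powr (-3)) t (2 * t - 1) < 1"
proof -
  have "0 < (1 - nR) * t\<^sup>2 - B * t + (\<mu> + C')"
  proof (rule quadratic_pos_beyond_root)
    show "B\<^sup>2 + 4 * (nR - 1) * (\<mu> + C') = B\<^sup>2 - 4 * (1 - nR) * (\<mu> + C')"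
      by (simp add: algebra_simps)
  qed (use assms in simp_all)
  txt \<open>The exact quadratic exceeds the one of the hypothesis by \<open>C' t - C' / 2 \<ge> 0\<close>.\<close>
  moreover have "C' \<le> C' * t" using assms mult_left_mono[of 1 t C'] by simp
  ultimately have "nR * t\<^sup>2 + C * t + (C' / 2 + \<mu>) * (2 * t - 1) < 1 * t\<^sup>2"
    using \<open>0 \<le> C'\<close> unfolding B_def by (simp add: algebra_simps)
  also have "nR * t\<^sup>2 + C * t + (C' / 2 + \<mu>) * (2 * t - 1)
      = contraction_bound nR C C' (\<mu> * t powr (-3)) t (2 * t - 1) * t\<^sup>2"
    using assms by (simp add: contraction_bound_def powr_minus_divide field_simps power2_eq_square
        power3_eq_cube)
  finally show ?thesis using assms by (simp add: mult_less_cancel_right)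
qed

lemma contraction_bound_cubic_less_1_even:
  fixes nR C C' \<mu> t :: real
  defines "B \<equiv> C + 2 * (\<mu> + C')"
  assumes "nR < 1" "1 \<le> t" "0 \<le> C'"
    and "(sqrt (B\<^sup>2 + 4 * (1 - nR) * \<mu>) + B) / (2 * (1 - nR)) < t"
  shows "contraction_bound nR C C' (\<mu> * t powr (-3)) t (2 * t) < 1"
proof -
  have "0 < (1 - nR) * t\<^sup>2 - B * t + (- \<mu>)"
  proof (rule quadratic_pos_beyond_root)
    show "B\<^sup>2 + 4 * (1 - nR) * \<mu> = B\<^sup>2 - 4 * (1 - nR) * (- \<mu>)"
      by (simp add: algebra_simps)
  qed (use assms in simp_all)
  moreover have "C' \<le> C' * t" using assms mult_left_mono[of 1 t C'] by simp
  ultimately have "nR * t\<^sup>2 + C * t + (C' / 2 + \<mu>) * (2 * t + 1) < 1 * t\<^sup>2"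
    using \<open>0 \<le> C'\<close> unfolding B_def by (simp add: algebra_simps)
  also have "nR * t\<^sup>2 + C * t + (C' / 2 + \<mu>) * (2 * t + 1)
      = contraction_bound nR C C' (\<mu> * t powr (-3)) t (2 * t) * t\<^sup>2"
    using assms by (simp add: contraction_bound_def powr_minus_divide field_simps power2_eq_square
        power3_eq_cube)
  finally show ?thesis using assms by (simp add: mult_less_cancel_right)
qed

theorem theorem5p4:
  fixes a0 a1 :: "nat \<Rightarrow> int \<Rightarrow> real"
    and L :: "nat \<Rightarrow> int"
    and r r' :: "real \<Rightarrow> real"
    and \<alpha> \<mu> :: real
  assumes L_choice: "\<And>n. n \<ge> 1 \<Longrightarrow> L n = int n - 1 \<or> L n = int n"
    and sym0: "\<And>n l. n \<ge> 1 \<Longrightarrow> l \<in> {1 - int n..L n} \<Longrightarrow> a0 n l = a0 n (L n + 1 - int n - l)"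
    and sym1: "\<And>n l. n \<ge> 1 \<Longrightarrow> l \<in> {1 - int n..L n + 1} \<Longrightarrow> a1 n l = a1 n (L n + 2 - int n - l)"
    and const0: "\<And>n. n \<ge> 1 \<Longrightarrow> (\<Sum>l\<in>{1 - int n..L n}. a0 n l) = 1"
    and const1: "\<And>n. n \<ge> 1 \<Longrightarrow> (\<Sum>l\<in>{1 - int n..L n + 1}. a1 n l) = 1"
    and r_deriv: "\<And>x. x \<in> {-1..1} \<Longrightarrow> (r has_real_derivative r' x) (at x within {-1..1})"
    and r'_cont: "continuous_on {-1..1} r'"
    and alpha: "\<alpha> > 2" and mu: "\<mu> > 0"
    and approx: "\<And>n j. n \<ge> 1 \<Longrightarrow> j \<in> {1 - int n..L n} \<Longrightarrow>
        \<bar>a0 n j - a1 n j - r (real_of_int j / real n) * real n powr (-2)\<bar> \<le> \<mu> * real n powr (-\<alpha>)"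
    and R_small: "integral {-1..1} (\<lambda>t. \<bar>integral {-1..t} r\<bar>) < 1"
  shows "(\<exists>n0::real. \<forall>n::nat. n \<ge> 1 \<and> real n > n0 \<longrightarrow>
            convergent_scheme (subdiv (a0 n) (a1 n) (1 - int n) (L n)))
       \<and> (\<alpha> = 3 \<longrightarrow>
          (let nR = integral {-1..1} (\<lambda>t. \<bar>integral {-1..t} r\<bar>);
               nr = Sup ((\<lambda>x. \<bar>r x\<bar>) ` {-1..1});
               nr' = Sup ((\<lambda>x. \<bar>r' x\<bar>) ` {-1..1});
               B = nr + 2 * (\<mu> + nr')
           in (\<forall>n::nat. n \<ge> 1 \<and> L n = int n - 1 \<and>
                 real n > (sqrt (B\<^sup>2 + 4 * (nR - 1) * (\<mu> + nr')) + B) / (2 * (1 - nR))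
                 \<longrightarrow> convergent_scheme (subdiv (a0 n) (a1 n) (1 - int n) (L n)))
            \<and> (\<forall>n::nat. n \<ge> 1 \<and> L n = int n \<and>
                 real n > (sqrt (B\<^sup>2 + 4 * (1 - nR) * \<mu>) + B) / (2 * (1 - nR))
                 \<longrightarrow> convergent_scheme (subdiv (a0 n) (a1 n) (1 - int n) (L n)))))"
proof -
  define nR where "nR = integral {-1..1} (\<lambda>t. \<bar>integral {-1..t} r\<bar>)"
  define nr where "nr = Sup ((\<lambda>x. \<bar>r x\<bar>) ` {-1..1})"
  define nr' where "nr' = Sup ((\<lambda>x. \<bar>r' x\<bar>) ` {-1..1})"
  define B where "B = nr + 2 * (\<mu> + nr')"
  have r_lip: "nr'-lipschitz_on {-1..1} r"
    and R_lip: "nr-lipschitz_on {-1..1} (\<lambda>t. \<bar>integral {-1..t} r\<bar>)"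
    using lipschitz_on_of_C1[of "-1" 1 r r'] r_deriv r'_cont by (auto simp: nr_def nr'_def)
  have nR: "nR < 1" using R_small by (simp add: nR_def)
  have conv: "convergent_scheme (subdiv (a0 n) (a1 n) (1 - int n) (L n))"
    if "1 \<le> n" and "contraction_bound nR nr nr' (\<mu> * real n powr (-\<alpha>)) (real n)
        (real (nat (L n + int n))) < 1" for n
    using L_choice[OF that(1)] that unfolding nR_def
    by (intro convergent_scheme_if_contraction_bound_less_1[OF that(1) _ _ sym0 sym1 const0 const1
          approx r_lip R_lip]) auto
  obtain t0 where t0: "\<And>t N. t0 < t \<and> 0 \<le> N \<and> N \<le> 2 * t \<Longrightarrow>
      contraction_bound nR nr nr' (\<mu> * t powr (-\<alpha>)) t N < 1"
    using contraction_bound_eventually_less_1[OF nR alpha lipschitz_on_nonneg[OF R_lip]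
        lipschitz_on_nonneg[OF r_lip] less_imp_le[OF mu]] by blast
  have "convergent_scheme (subdiv (a0 n) (a1 n) (1 - int n) (L n))" if "1 \<le> n" "t0 < real n" for n
    using L_choice[OF that(1)] that by (intro conv t0) auto
  moreover have "convergent_scheme (subdiv (a0 n) (a1 n) (1 - int n) (L n))"
    if "\<alpha> = 3" "1 \<le> n" "L n = int n - 1"
      "(sqrt (B\<^sup>2 + 4 * (nR - 1) * (\<mu> + nr')) + B) / (2 * (1 - nR)) < real n" for n
    using that contraction_bound_cubic_less_1_odd[OF nR _ lipschitz_on_nonneg[OF r_lip]]
    by (intro conv) (auto simp: B_def of_nat_diff)
  moreover have "convergent_scheme (subdiv (a0 n) (a1 n) (1 - int n) (L n))"
    if "\<alpha> = 3" "1 \<le> n" "L n = int n"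
      "(sqrt (B\<^sup>2 + 4 * (1 - nR) * \<mu>) + B) / (2 * (1 - nR)) < real n" for n
    using that contraction_bound_cubic_less_1_even[OF nR _ lipschitz_on_nonneg[OF r_lip]]
    by (intro conv) (auto simp: B_def)
  ultimately show ?thesis
    unfolding Let_def nR_def[symmetric] nr_def[symmetric] nr'_def[symmetric] B_def[symmetric]
    by blast
qed

end
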